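(* Assume $\kappa=\kappa^{<\kappa}$. Every point of $S_\kappa$ is a strong butterfly point: for every $x\in S_\kappa$ there are disjoint open sets $A,B\subseteq S_\kappa$ with $A\cup B=S_\kappa\setminus\{x\}$ and $\overline{A}\cap\overline{B}=\{x\}$.
   Context: A space is zero-dimensional if it has a base of clopen sets. For a zero-dimensional space $X$ and an open $U\subseteq X$, the ($X$-)type $\tau(U)$ is the least cardinal $\tau$ such that $U$ is a union of $\tau$ many clopen subsets of $X$. A zero-dimensional space is an $F_\kappa$-space if every open subset of type less than $\kappa$ is $C^*$-embedded (every bounded continuous real-valued function on it extends continuously to the whole space). A space is a $G_\kappa$-space if every non-empty intersection of fewer than $\kappa$ open sets has non-empty interior. A $\kappa$-Parovičenko space is a compact Hausdorff zero-dimensional $F_\kappa$- and $G_\kappa$-space without isolated points (no weight restriction is imposed). If $\kappa=\kappa^{<\kappa}$ there is, up to homeomorphism, a unique $\kappa$-Parovičenko space of weight $\kappa$; it is denoted $S_\kappa$ (under CH, $S_{\omega_1}\cong\omega^*=\beta\omega\setminus\omega$). A point $x$ of a Hausdorff space $X$ is a strong butterfly point if $X\setminus\{x\}$ can be partitioned into open sets $A,B$ (the wings) with $\overline{A}\cap\overline{B}=\{x\}$. *)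

theory Defs
  imports "HOL-Analysis.Analysis"
begin

definition card_le :: "'a set \<Rightarrow> 'b set \<Rightarrow> bool" where
  "card_le A B \<longleftrightarrow> ordLeq2 (card_of A) (card_of B)"

definition card_lt :: "'a set \<Rightarrow> 'b set \<Rightarrow> bool" where
  "card_lt A B \<longleftrightarrow> ordLess2 (card_of A) (card_of B)"

definition card_eq :: "'a set \<Rightarrow> 'b set \<Rightarrow> bool" where
  "card_eq A B \<longleftrightarrow> ordIso2 (card_of A) (card_of B)"

text \<open>kappa = kappa^{<kappa}, kappa represented by (the cardinality of) a set K:
  for every cardinal lambda < kappa (represented by a subset S of K), kappa^lambda <= kappa.\<close>
definition kappa_eq_kappa_less_kappa :: "'k set \<Rightarrow> bool" where
  "kappa_eq_kappa_less_kappa K \<longleftrightarrow>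
     (\<forall>S. S \<subseteq> K \<longrightarrow> card_lt S K \<longrightarrow> card_le (Func S K) K)"

definition clopenin :: "'a topology \<Rightarrow> 'a set \<Rightarrow> bool" where
  "clopenin X C \<longleftrightarrow> openin X C \<and> closedin X C"

definition zero_dimensional :: "'a topology \<Rightarrow> bool" where
  "zero_dimensional X \<longleftrightarrow>
     (\<forall>U x. openin X U \<and> x \<in> U \<longrightarrow> (\<exists>C. clopenin X C \<and> x \<in> C \<and> C \<subseteq> U))"

definition type_less :: "'a topology \<Rightarrow> 'a set \<Rightarrow> 'k set \<Rightarrow> bool" where
  "type_less X U K \<longleftrightarrow>
     (\<exists>F. (\<forall>C\<in>F. clopenin X C) \<and> \<Union>F = U \<and> card_lt F K)"

definition C_star_embedded :: "'a topology \<Rightarrow> 'a set \<Rightarrow> bool" where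
  "C_star_embedded X U \<longleftrightarrow>
     (\<forall>f. continuous_map (subtopology X U) euclideanreal f \<and> bounded (f ` U) \<longrightarrow>
        (\<exists>g. continuous_map X euclideanreal g \<and> (\<forall>x\<in>U. g x = f x)))"

definition F_kappa_space :: "'a topology \<Rightarrow> 'k set \<Rightarrow> bool" where
  "F_kappa_space X K \<longleftrightarrow> zero_dimensional X \<and>
     (\<forall>U. openin X U \<and> type_less X U K \<longrightarrow> C_star_embedded X U)"

definition G_kappa_space :: "'a topology \<Rightarrow> 'k set \<Rightarrow> bool" where
  "G_kappa_space X K \<longleftrightarrow>
     (\<forall>F. (\<forall>V\<in>F. openin X V) \<and> card_lt F K \<and> topspace X \<inter> \<Inter>F \<noteq> {} \<longrightarrow>
        X interior_of (topspace X \<inter> \<Inter>F) \<noteq> {})"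

definition kappa_Parovicenko :: "'a topology \<Rightarrow> 'k set \<Rightarrow> bool" where
  "kappa_Parovicenko X K \<longleftrightarrow>
     compact_space X \<and> Hausdorff_space X \<and> zero_dimensional X \<and>
     F_kappa_space X K \<and> G_kappa_space X K \<and>
     (\<forall>x\<in>topspace X. \<not> openin X {x})"

definition is_base :: "'a topology \<Rightarrow> 'a set set \<Rightarrow> bool" where
  "is_base X B \<longleftrightarrow> (\<forall>V\<in>B. openin X V) \<and>
     (\<forall>U. openin X U \<longrightarrow> (\<exists>F. F \<subseteq> B \<and> \<Union>F = U))"

definition weight_eq :: "'a topology \<Rightarrow> 'k set \<Rightarrow> bool" where
  "weight_eq X K \<longleftrightarrow> (\<exists>B. is_base X B \<and> card_eq B K) \<and>
     (\<forall>B. is_base X B \<longrightarrow> card_le K B)"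

definition strong_butterfly_point :: "'a topology \<Rightarrow> 'a \<Rightarrow> bool" where
  "strong_butterfly_point X x \<longleftrightarrow>
     (\<exists>A B. openin X A \<and> openin X B \<and> A \<inter> B = {} \<and> A \<union> B = topspace X - {x} \<and>
        X closure_of A \<inter> X closure_of B = {x})"

end

theory Submission
  imports Defs
begin

unbundle cardinal_syntax

text \<open>A clopen set of a compact space is a finite union of members of a base, so there are at
  most \<open>\<kappa>\<close> clopen sets; list them as \<open>C k\<close>, \<open>k \<in> K\<close>, and well-order \<open>K\<close> in type \<open>\<kappa>\<close>. By transfinite
  recursion choose disjoint clopen sets \<open>P k\<close>, \<open>Q k\<close> not containing \<open>x\<close> such that \<open>P k\<close> misses the
  closure of \<open>V k = \<Union>j<k. Q j\<close> and \<open>Q k\<close> misses the closure of \<open>U k = \<Union>j<k. P j\<close>, with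
  \<open>C k \<subseteq> P k \<union> Q k\<close> when \<open>x \<notin> C k\<close> and with both \<open>P k\<close> and \<open>Q k\<close> meeting \<open>C k\<close> when \<open>x \<in> C k\<close>.
  Since \<open>U k \<union> V k\<close> is a union of fewer than \<open>\<kappa>\<close> clopen sets, the \<open>F\<^sub>\<kappa>\<close>-property makes the closures
  of \<open>U k\<close> and \<open>V k\<close> disjoint, which settles the first case; in the second, the \<open>G\<^sub>\<kappa>\<close>-property and
  the absence of isolated points leave nonempty clopen room inside \<open>C k\<close>, away from \<open>x\<close> and from the
  closure of \<open>U k \<union> V k\<close>. The wings are \<open>A = \<Union>k. P k\<close> and \<open>B = \<Union>k. Q k\<close>.\<close>

lemma card_of_lists_ordLeq_infinite:
  assumes inf: "infinite B"
  shows "|lists B| \<le>o |B|"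
proof -
  have len: "|{l \<in> lists B. length l = n}| \<le>o |B|" for n
  proof (induction n)
    case 0
    have "{l \<in> lists B. length l = 0} = {[]}" by auto
    moreover have "B \<noteq> {}" using inf by auto
    ultimately show ?case using card_of_singl_ordLeq by simp
  next
    case (Suc n)
    let ?S = "{l \<in> lists B. length l = n}"
    have sub: "{l \<in> lists B. length l = Suc n} \<subseteq> (\<lambda>(b,l). b#l) ` (B \<times> ?S)"
    proof
      fix l assume "l \<in> {l \<in> lists B. length l = Suc n}"
      then obtain b t where "l = b#t" "b \<in> B" "t \<in> ?S" by (cases l) auto
      then show "l \<in> (\<lambda>(b,l). b#l) ` (B \<times> ?S)" by force
    qed
    have "|{l \<in> lists B. length l = Suc n}| \<le>o |(\<lambda>(b,l). b#l) ` (B \<times> ?S)|"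
      by (rule card_of_mono1[OF sub])
    also have "|(\<lambda>(b,l). b#l) ` (B \<times> ?S)| \<le>o |B \<times> ?S|"
      by (rule card_of_image)
    also have "|B \<times> ?S| \<le>o |B|"
      using card_of_Sigma_ordLeq_infinite[OF inf, of B "\<lambda>_. ?S"] Suc
        ordIso_imp_ordLeq[OF card_of_refl[of B]] by simp
    finally show ?case .
  qed
  have "lists B = (\<Union>n. {l \<in> lists B. length l = n})" by auto
  moreover have "|\<Union>n. {l \<in> lists B. length l = n}| \<le>o |B|"
    by (rule card_of_UNION_ordLeq_infinite[OF inf]) (use len infinite_iff_card_of_nat inf in auto)
  ultimately show ?thesis by simp
qed

lemma clopenin_Int: "clopenin X S \<Longrightarrow> clopenin X T \<Longrightarrow> clopenin X (S \<inter> T)"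
  and clopenin_Un: "clopenin X S \<Longrightarrow> clopenin X T \<Longrightarrow> clopenin X (S \<union> T)"
  and clopenin_diff: "clopenin X S \<Longrightarrow> clopenin X T \<Longrightarrow> clopenin X (S - T)"
  by (auto simp: clopenin_def)

lemma clopenin_Union: "finite \<F> \<Longrightarrow> (\<And>C. C \<in> \<F> \<Longrightarrow> clopenin X C) \<Longrightarrow> clopenin X (\<Union>\<F>)"
  by (auto simp: clopenin_def intro: closedin_Union)

lemma clopenin_subset_topspace: "clopenin X C \<Longrightarrow> C \<subseteq> topspace X"
  by (simp add: clopenin_def openin_subset)

lemma card_of_clopens_ordLeq_base:
  assumes cs: "compact_space X" and base: "is_base X \<B>" and inf: "infinite \<B>"
  shows "|{C. clopenin X C}| \<le>o |\<B>|"
proof -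
  have "{C. clopenin X C} \<subseteq> (\<lambda>l. \<Union>(set l)) ` lists \<B>"
  proof
    fix C assume "C \<in> {C. clopenin X C}"
    hence C: "clopenin X C" by simp
    obtain \<F> where \<F>: "\<F> \<subseteq> \<B>" "\<Union>\<F> = C"
      using base C unfolding is_base_def clopenin_def by blast
    have "compactin X C" using closedin_compact_space[OF cs] C unfolding clopenin_def by blast
    moreover have "\<forall>U\<in>\<F>. openin X U" using \<F> base unfolding is_base_def by blast
    ultimately obtain \<F>' where \<F>': "finite \<F>'" "\<F>' \<subseteq> \<F>" "C \<subseteq> \<Union>\<F>'"
      using \<F> unfolding compactin_def by (metis order_refl)
    obtain l where l: "set l = \<F>'" using finite_list[OF \<F>'(1)] by blast
    have "\<Union>(set l) = C" "l \<in> lists \<B>" using l \<F> \<F>' by auto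
    then show "C \<in> (\<lambda>l. \<Union>(set l)) ` lists \<B>" by blast
  qed
  then have "|{C. clopenin X C}| \<le>o |(\<lambda>l. \<Union>(set l)) ` lists \<B>|"
    by (rule card_of_mono1)
  also have "|(\<lambda>l. \<Union>(set l)) ` lists \<B>| \<le>o |lists \<B>|"
    by (rule card_of_image)
  also have "|lists \<B>| \<le>o |\<B>|"
    by (rule card_of_lists_ordLeq_infinite[OF inf])
  finally show ?thesis .
qed

lemma clopenin_separating_closedin:
  assumes cs: "compact_space X" and zd: "zero_dimensional X"
    and S: "closedin X S" and T: "closedin X T" and dj: "S \<inter> T = {}"
  obtains E where "clopenin X E" "S \<subseteq> E" "E \<inter> T = {}"
proof -
  have "\<exists>C. clopenin X C \<and> p \<in> C \<and> C \<subseteq> topspace X - T" if "p \<in> S" for p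
  proof -
    have "openin X (topspace X - T)" "p \<in> topspace X - T"
      using T that dj closedin_subset[OF S] by auto
    then show ?thesis using zd unfolding zero_dimensional_def by blast
  qed
  then obtain c where c: "\<And>p. p \<in> S \<Longrightarrow> clopenin X (c p) \<and> p \<in> c p \<and> c p \<subseteq> topspace X - T"
    by metis
  have "compactin X S" using closedin_compact_space[OF cs S] .
  moreover have "\<forall>U\<in>c ` S. openin X U" using c clopenin_def by auto
  moreover have "S \<subseteq> \<Union>(c ` S)" using c by auto
  ultimately obtain \<F> where \<F>: "finite \<F>" "\<F> \<subseteq> c ` S" "S \<subseteq> \<Union>\<F>"
    unfolding compactin_def by metis
  have "clopenin X (\<Union>\<F>)" using \<F> c by (intro clopenin_Union) blast+
  moreover have "\<Union>\<F> \<inter> T = {}" using \<F> c by blast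
  ultimately show ?thesis using that[of "\<Union>\<F>"] \<F>(3) by blast
qed

lemma continuous_map_indicator_disjoint_open:
  assumes U: "openin X U" and V: "openin X V" and dj: "U \<inter> V = {}"
  shows "continuous_map (subtopology X (U \<union> V)) euclideanreal (\<lambda>z. if z \<in> V then 1 else 0)"
  unfolding continuous_map_def
proof (intro conjI allI impI)
  show "(\<lambda>z. if z \<in> V then 1 else 0) \<in> topspace (subtopology X (U \<union> V)) \<rightarrow> topspace euclideanreal"
    by simp
  fix T :: "real set"
  let ?W = "(if 1 \<in> T then V else {}) \<union> (if 0 \<in> T then U else {})"
  have "{z \<in> topspace (subtopology X (U \<union> V)). (if z \<in> V then 1 else 0) \<in> T} = ?W"
    using openin_subset[OF U] openin_subset[OF V] dj by auto
  moreover have "openin X ?W" "?W \<subseteq> U \<union> V" using U V by auto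
  ultimately show "openin (subtopology X (U \<union> V))
      {z \<in> topspace (subtopology X (U \<union> V)). (if z \<in> V then 1 else 0) \<in> T}"
    unfolding openin_subtopology by blast
qed

text \<open>The indicator of \<open>V\<close> on \<open>U \<union> V\<close> extends to \<open>X\<close>; the extension is \<open>0\<close> on the closure of \<open>U\<close>
  and \<open>1\<close> on the closure of \<open>V\<close>.\<close>
lemma F_kappa_closure_of_disjoint:
  assumes FK: "F_kappa_space X K" and U: "openin X U" and V: "openin X V"
    and dj: "U \<inter> V = {}" and small: "type_less X (U \<union> V) K"
  shows "X closure_of U \<inter> X closure_of V = {}"
proof -
  define f where "f = (\<lambda>z. if z \<in> V then 1 else (0::real))"
  have "C_star_embedded X (U \<union> V)"
    using FK U V small unfolding F_kappa_space_def by blast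
  moreover have "bounded (f ` (U \<union> V))"
    by (rule bounded_subset[of "{0,1}"]) (auto simp: f_def)
  ultimately obtain g where g: "continuous_map X euclideanreal g" "\<forall>z\<in>U \<union> V. g z = f z"
    using continuous_map_indicator_disjoint_open[OF U V dj]
    unfolding C_star_embedded_def f_def by blast
  have "X closure_of U \<subseteq> {z \<in> topspace X. g z \<in> {0}}"
    by (rule closure_of_minimal[OF _ closedin_continuous_map_preimage[OF g(1)]])
      (use g(2) openin_subset[OF U] dj in \<open>auto simp: f_def\<close>)
  moreover have "X closure_of V \<subseteq> {z \<in> topspace X. g z \<in> {1}}"
    by (rule closure_of_minimal[OF _ closedin_continuous_map_preimage[OF g(1)]])
      (use g(2) openin_subset[OF V] in \<open>auto simp: f_def\<close>)
  ultimately show ?thesis by fastforce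
qed

lemma G_kappa_interior_of_diff_Union:
  assumes GK: "G_kappa_space X K" and C: "openin X C"
    and \<F>: "\<forall>T\<in>\<F>. closedin X T" and small: "card_lt \<F> K" and ne: "C - \<Union>\<F> \<noteq> {}"
  shows "X interior_of (C - \<Union>\<F>) \<noteq> {}"
proof (cases "\<F> = {}")
  case True
  then show ?thesis using ne C by (simp add: interior_of_openin)
next
  case False
  let ?\<G> = "(\<lambda>T. C - T) ` \<F>"
  have eq: "topspace X \<inter> \<Inter>?\<G> = C - \<Union>\<F>" using False openin_subset[OF C] by auto
  have "\<forall>V\<in>?\<G>. openin X V" using \<F> C by blast
  moreover have "card_lt ?\<G> K"
    using ordLeq_ordLess_trans[OF card_of_image] small unfolding card_lt_def by blast
  moreover have "topspace X \<inter> \<Inter>?\<G> \<noteq> {}" using ne eq by simp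
  ultimately have "X interior_of (topspace X \<inter> \<Inter>?\<G>) \<noteq> {}"
    using GK[unfolded G_kappa_space_def, rule_format, of ?\<G>] by blast
  then show ?thesis using eq by simp
qed

lemma clopenin_nonempty_avoiding_point:
  assumes H: "Hausdorff_space X" and zd: "zero_dimensional X"
    and noiso: "\<forall>y\<in>topspace X. \<not> openin X {y}" and W: "openin X W" "W \<noteq> {}"
  obtains P where "clopenin X P" "P \<noteq> {}" "P \<subseteq> W - {x}"
proof -
  have "W \<noteq> {x}" using W noiso openin_subset by blast
  with W(2) obtain p where p: "p \<in> W - {x}" by blast
  have "openin X (W - {x})"
  proof (cases "x \<in> topspace X")
    case True
    then show ?thesis
      using W Hausdorff_imp_t1_space[OF H] by (simp add: openin_diff t1_space_closedin_singleton)
  next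
    case False
    then have "W - {x} = W" using openin_subset[OF W(1)] by blast
    then show ?thesis using W by simp
  qed
  with p show ?thesis
    using zd that unfolding zero_dimensional_def by blast
qed

lemma G_kappa_clopenin_avoiding_closure_of:
  assumes GK: "G_kappa_space X K" and H: "Hausdorff_space X" and zd: "zero_dimensional X"
    and noiso: "\<forall>y\<in>topspace X. \<not> openin X {y}"
    and C: "clopenin X C" "x \<in> C" and W: "type_less X W K" "x \<notin> W"
  obtains P where "clopenin X P" "P \<noteq> {}" "P \<subseteq> C - X closure_of W - {x}"
proof -
  obtain \<F> where \<F>: "\<forall>T\<in>\<F>. clopenin X T" "\<Union>\<F> = W" "card_lt \<F> K"
    using W(1) unfolding type_less_def by blast
  let ?I = "X interior_of (C - W)"
  have "openin X C" "\<forall>T\<in>\<F>. closedin X T" "C - \<Union>\<F> \<noteq> {}"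
    using C W(2) \<F>(1,2) unfolding clopenin_def by auto
  from G_kappa_interior_of_diff_Union[OF GK this(1,2) \<F>(3) this(3)]
  have "?I \<noteq> {}" using \<F>(2) by simp
  then obtain P where P: "clopenin X P" "P \<noteq> {}" "P \<subseteq> ?I - {x}"
    by (rule clopenin_nonempty_avoiding_point[OF H zd noiso openin_interior_of])
  have "?I \<inter> X closure_of W = {}"
    using interior_of_subset[of X "C - W"]
    by (subst openin_Int_closure_of_eq_empty[OF openin_interior_of]) blast
  then have "P \<subseteq> C - X closure_of W - {x}"
    using P(3) interior_of_subset[of X "C - W"] by blast
  then show ?thesis by (rule that[OF P(1,2)])
qed

text \<open>The requirements on the pair \<open>(P k, Q k)\<close> chosen at stage \<open>k\<close>: \<open>U\<close> and \<open>V\<close> are the unions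
  of the earlier \<open>P j\<close> and \<open>Q j\<close>, and \<open>C\<close> is the \<open>k\<close>-th clopen set.\<close>
definition wings_extend :: "'a topology \<Rightarrow> 'a \<Rightarrow> 'a set \<Rightarrow> 'a set \<Rightarrow> 'a set \<Rightarrow> 'a set \<Rightarrow> bool" where
  "wings_extend X x U V P Q \<longleftrightarrow> clopenin X P \<and> clopenin X Q \<and> x \<notin> P \<and> x \<notin> Q \<and> P \<inter> Q = {} \<and>
     P \<inter> X closure_of V = {} \<and> Q \<inter> X closure_of U = {}"

definition handles :: "'a \<Rightarrow> 'a set \<Rightarrow> 'a set \<Rightarrow> 'a set \<Rightarrow> bool" where
  "handles x C P Q \<longleftrightarrow> (if x \<in> C then P \<inter> C \<noteq> {} \<and> Q \<inter> C \<noteq> {} else C \<subseteq> P \<union> Q)"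

lemma wings_extend_handles_exists:
  assumes X: "kappa_Parovicenko X K"
    and U: "openin X U" and V: "openin X V" and dj: "U \<inter> V = {}" and x: "x \<notin> U \<union> V"
    and small: "type_less X (U \<union> V) K" and C: "clopenin X C"
  shows "\<exists>P Q. wings_extend X x U V P Q \<and> handles x C P Q"
proof -
  have cs: "compact_space X" and H: "Hausdorff_space X" and zd: "zero_dimensional X"
    and FK: "F_kappa_space X K" and GK: "G_kappa_space X K"
    and noiso: "\<forall>y\<in>topspace X. \<not> openin X {y}"
    using X unfolding kappa_Parovicenko_def by auto
  show ?thesis
  proof (cases "x \<in> C")
    case False
    have "closedin X (C \<inter> X closure_of U)" "closedin X (C \<inter> X closure_of V)"
      using C by (auto simp: clopenin_def)
    moreover have "(C \<inter> X closure_of U) \<inter> (C \<inter> X closure_of V) = {}"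
      using F_kappa_closure_of_disjoint[OF FK U V dj small] by blast
    ultimately obtain E where E: "clopenin X E" "C \<inter> X closure_of U \<subseteq> E"
        "E \<inter> (C \<inter> X closure_of V) = {}"
      using clopenin_separating_closedin[OF cs zd] by metis
    have "wings_extend X x U V (C \<inter> E) (C - E)"
      using E C False unfolding wings_extend_def by (auto intro: clopenin_Int clopenin_diff)
    moreover have "handles x C (C \<inter> E) (C - E)"
      using False unfolding handles_def by auto
    ultimately show ?thesis by blast
  next
    case True
    obtain P where P: "clopenin X P" "P \<noteq> {}" "P \<subseteq> C - X closure_of (U \<union> V) - {x}"
      using G_kappa_clopenin_avoiding_closure_of[OF GK H zd noiso C True small x] .
    have "x \<in> C - P" using True P(3) by blast
    then obtain Q where Q: "clopenin X Q" "Q \<noteq> {}" "Q \<subseteq> (C - P) - X closure_of (U \<union> V) - {x}"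
      using G_kappa_clopenin_avoiding_closure_of[OF GK H zd noiso clopenin_diff[OF C P(1)] _ small x]
      by blast
    have "wings_extend X x U V P Q"
      using P(1,3) Q(1,3) closure_of_mono[of U "U \<union> V" X] closure_of_mono[of V "U \<union> V" X]
      unfolding wings_extend_def by blast
    moreover have "handles x C P Q"
    proof -
      have "P \<inter> C = P" "Q \<inter> C = Q" using P(3) Q(3) by blast+
      then show ?thesis using True P(2) Q(2) by (simp add: handles_def)
    qed
    ultimately show ?thesis by blast
  qed
qed

lemma wings_extend_disjoint:
  fixes P Q :: "'k \<Rightarrow> 'a set"
  assumes wings: "\<And>k. k \<in> K \<Longrightarrow>
      wings_extend X x (\<Union>i\<in>{i. (i, k) \<in> R}. P i) (\<Union>i\<in>{i. (i, k) \<in> R}. Q i) (P k) (Q k)"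
    and total: "\<And>i k. i \<in> K \<Longrightarrow> k \<in> K \<Longrightarrow> i \<noteq> k \<Longrightarrow> (i, k) \<in> R \<or> (k, i) \<in> R"
    and j: "j \<in> K" and k: "k \<in> K"
  shows "P j \<inter> Q k = {}"
proof -
  have top: "P i \<subseteq> topspace X" "Q i \<subseteq> topspace X" if "i \<in> K" for i
    using wings[OF that] clopenin_subset_topspace unfolding wings_extend_def by auto
  consider "j = k" | "(j, k) \<in> R" | "(k, j) \<in> R" using total j k by blast
  then show ?thesis
  proof cases
    case 1
    then show ?thesis using wings[OF k] unfolding wings_extend_def by blast
  next
    case 2
    have "P j \<subseteq> X closure_of (\<Union>i\<in>{i. (i, k) \<in> R}. P i)"
      using closure_of_subset[OF top(1)[OF j]] closure_of_mono[of "P j" "\<Union>i\<in>{i. (i, k) \<in> R}. P i" X] 2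
      by blast
    then show ?thesis using wings[OF k] unfolding wings_extend_def by blast
  next
    case 3
    have "Q k \<subseteq> X closure_of (\<Union>i\<in>{i. (i, j) \<in> R}. Q i)"
      using closure_of_subset[OF top(2)[OF k]] closure_of_mono[of "Q k" "\<Union>i\<in>{i. (i, j) \<in> R}. Q i" X] 3
      by blast
    then show ?thesis using wings[OF j] unfolding wings_extend_def by blast
  qed
qed

lemma wings_extend_step:
  fixes P Q :: "'k \<Rightarrow> 'a set"
  assumes X: "kappa_Parovicenko X K"
    and wings: "\<And>j. j \<in> J \<Longrightarrow>
      wings_extend X x (\<Union>i\<in>{i. (i, j) \<in> R}. P i) (\<Union>i\<in>{i. (i, j) \<in> R}. Q i) (P j) (Q j)"
    and total: "\<And>i j. i \<in> J \<Longrightarrow> j \<in> J \<Longrightarrow> i \<noteq> j \<Longrightarrow> (i, j) \<in> R \<or> (j, i) \<in> R"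
    and small: "card_lt J K" and C: "clopenin X C"
  shows "\<exists>P' Q'. wings_extend X x (\<Union>j\<in>J. P j) (\<Union>j\<in>J. Q j) P' Q' \<and> handles x C P' Q'"
proof (rule wings_extend_handles_exists[OF X _ _ _ _ _ C])
  have clop: "clopenin X (P j)" "clopenin X (Q j)" "x \<notin> P j" "x \<notin> Q j" if "j \<in> J" for j
    using wings[OF that] unfolding wings_extend_def by auto
  then show "openin X (\<Union>j\<in>J. P j)" "openin X (\<Union>j\<in>J. Q j)" "x \<notin> (\<Union>j\<in>J. P j) \<union> (\<Union>j\<in>J. Q j)"
    unfolding clopenin_def by auto
  show "(\<Union>j\<in>J. P j) \<inter> (\<Union>j\<in>J. Q j) = {}"
    using wings_extend_disjoint[OF wings total] by blast
  let ?\<F> = "(\<lambda>j. P j \<union> Q j) ` J"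
  have "\<forall>T\<in>?\<F>. clopenin X T" using clop by (auto intro: clopenin_Un)
  moreover have "\<Union>?\<F> = (\<Union>j\<in>J. P j) \<union> (\<Union>j\<in>J. Q j)" by blast
  moreover have "card_lt ?\<F> K"
    using ordLeq_ordLess_trans[OF card_of_image] small unfolding card_lt_def by blast
  ultimately show "type_less X ((\<Union>j\<in>J. P j) \<union> (\<Union>j\<in>J. Q j)) K"
    unfolding type_less_def by blast
qed

lemma wf_rec_choice:
  assumes wf: "wf R"
    and local: "\<And>g g' k. (\<And>j. (j, k) \<in> R \<Longrightarrow> g j = g' j) \<Longrightarrow> P g k = P g' k"
    and step: "\<And>g k. (\<And>j. (j, k) \<in> R \<Longrightarrow> P g j (g j)) \<Longrightarrow> \<exists>y. P g k y"
  shows "\<exists>h. \<forall>k. P h k (h k)"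
proof -
  define h where "h = wfrec R (\<lambda>g k. SOME y. P g k y)"
  have h: "h k = (SOME y. P h k y)" for k
  proof -
    have "h k = (SOME y. P (cut h R k) k y)"
      unfolding h_def by (rule wfrec[OF wf])
    also have "P (cut h R k) k = P h k"
      by (rule local) (simp add: cut_apply)
    finally show ?thesis .
  qed
  have "P h k (h k)" for k
    using wf
  proof (induction k rule: wf_induct_rule)
    case (less k)
    then have "\<exists>y. P h k y" by (rule step)
    then show ?case by (subst h) (rule someI_ex)
  qed
  then show ?thesis by blast
qed

lemma handles_not_memD: "handles x C P Q \<Longrightarrow> x \<notin> C \<Longrightarrow> C \<subseteq> P \<union> Q"
  and handles_memD: "handles x C P Q \<Longrightarrow> x \<in> C \<Longrightarrow> P \<inter> C \<noteq> {} \<and> Q \<inter> C \<noteq> {}"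
  by (simp_all add: handles_def)

lemma strong_butterfly_point_if_clopen_wings:
  fixes P Q :: "'k \<Rightarrow> 'a set"
  assumes zd: "zero_dimensional X" and H: "Hausdorff_space X" and x: "x \<in> topspace X"
    and clop: "\<And>k. k \<in> K \<Longrightarrow> clopenin X (P k) \<and> clopenin X (Q k) \<and> x \<notin> P k \<union> Q k"
    and dj: "\<And>j k. j \<in> K \<Longrightarrow> k \<in> K \<Longrightarrow> P j \<inter> Q k = {}"
    and handled: "\<And>C. clopenin X C \<Longrightarrow> \<exists>k\<in>K. handles x C (P k) (Q k)"
  shows "strong_butterfly_point X x"
proof -
  define A where "A = (\<Union>k\<in>K. P k)"
  define B where "B = (\<Union>k\<in>K. Q k)"
  have oA: "openin X A" and oB: "openin X B"
    using clop unfolding A_def B_def clopenin_def by auto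
  have dAB: "A \<inter> B = {}" using dj unfolding A_def B_def by blast
  have cover: "A \<union> B = topspace X - {x}"
  proof
    show "A \<union> B \<subseteq> topspace X - {x}"
      using clop clopenin_subset_topspace unfolding A_def B_def by blast
    have open_punctured: "openin X (topspace X - {x})"
      using Hausdorff_imp_t1_space[OF H] x by (simp add: t1_space_closedin_singleton openin_diff)
    show "topspace X - {x} \<subseteq> A \<union> B"
    proof
      fix y assume "y \<in> topspace X - {x}"
      then obtain C where C: "clopenin X C" "y \<in> C" "C \<subseteq> topspace X - {x}"
        using zd open_punctured unfolding zero_dimensional_def by blast
      then obtain k where k: "k \<in> K" "handles x C (P k) (Q k)" using handled by blast
      have "C \<subseteq> P k \<union> Q k" using handles_not_memD[OF k(2)] C(3) by blast
      then show "y \<in> A \<union> B" using k(1) C(2) unfolding A_def B_def by blast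
    qed
  qed
  have meets: "A \<inter> T \<noteq> {} \<and> B \<inter> T \<noteq> {}" if T: "x \<in> T" "openin X T" for T
  proof -
    obtain C where C: "clopenin X C" "x \<in> C" "C \<subseteq> T"
      using zd T unfolding zero_dimensional_def by blast
    then obtain k where k: "k \<in> K" "handles x C (P k) (Q k)" using handled by blast
    have "P k \<inter> C \<noteq> {}" "Q k \<inter> C \<noteq> {}" using handles_memD[OF k(2) C(2)] by auto
    then show ?thesis using k(1) C(3) unfolding A_def B_def by blast
  qed
  have "x \<in> X closure_of A" "x \<in> X closure_of B"
    unfolding in_closure_of using x meets by blast+
  moreover have "B \<inter> X closure_of A = {}" "A \<inter> X closure_of B = {}"
    using openin_Int_closure_of_eq_empty[OF oB] openin_Int_closure_of_eq_empty[OF oA] dAB by blast+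
  moreover have "X closure_of A \<subseteq> topspace X" by (rule closure_of_subset_topspace)
  ultimately have "X closure_of A \<inter> X closure_of B = {x}" using cover by blast
  then show ?thesis
    unfolding strong_butterfly_point_def using oA oB dAB cover by blast
qed

lemma wings_extend_recursion:
  fixes e :: "'k \<Rightarrow> 'a set"
  assumes X: "kappa_Parovicenko X K" and e: "\<And>k. k \<in> K \<Longrightarrow> clopenin X (e k)"
    and wf: "wf R" and total: "\<And>j k. j \<in> K \<Longrightarrow> k \<in> K \<Longrightarrow> j \<noteq> k \<Longrightarrow> (j, k) \<in> R \<or> (k, j) \<in> R"
    and below_K: "\<And>j k. (j, k) \<in> R \<Longrightarrow> j \<in> K"
    and small: "\<And>k. k \<in> K \<Longrightarrow> card_lt {j. (j, k) \<in> R} K"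
  shows "\<exists>P Q :: 'k \<Rightarrow> 'a set. \<forall>k\<in>K.
    wings_extend X x (\<Union>j\<in>{j. (j, k) \<in> R}. P j) (\<Union>j\<in>{j. (j, k) \<in> R}. Q j) (P k) (Q k) \<and>
    handles x (e k) (P k) (Q k)"
proof -
  define admissible where "admissible g k pq \<longleftrightarrow> k \<in> K \<longrightarrow>
      wings_extend X x (\<Union>j\<in>{j. (j, k) \<in> R}. fst (g j)) (\<Union>j\<in>{j. (j, k) \<in> R}. snd (g j))
        (fst pq) (snd pq) \<and> handles x (e k) (fst pq) (snd pq)"
    for g :: "'k \<Rightarrow> 'a set \<times> 'a set" and k pq
  have "\<exists>h. \<forall>k. admissible h k (h k)"
  proof (rule wf_rec_choice[OF wf])
    fix g g' :: "'k \<Rightarrow> 'a set \<times> 'a set" and k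
    assume "\<And>j. (j, k) \<in> R \<Longrightarrow> g j = g' j"
    then have "(\<Union>j\<in>{j. (j, k) \<in> R}. fst (g j)) = (\<Union>j\<in>{j. (j, k) \<in> R}. fst (g' j))"
      "(\<Union>j\<in>{j. (j, k) \<in> R}. snd (g j)) = (\<Union>j\<in>{j. (j, k) \<in> R}. snd (g' j))"
      by auto
    then show "admissible g k = admissible g' k" by (intro ext) (simp only: admissible_def)
  next
    fix g :: "'k \<Rightarrow> 'a set \<times> 'a set" and k
    assume IH: "\<And>j. (j, k) \<in> R \<Longrightarrow> admissible g j (g j)"
    show "\<exists>pq. admissible g k pq"
    proof (cases "k \<in> K")
      case True
      have lower_wings: "wings_extend X x (\<Union>i\<in>{i. (i, j) \<in> R}. fst (g i))
          (\<Union>i\<in>{i. (i, j) \<in> R}. snd (g i)) (fst (g j)) (snd (g j))" if "j \<in> {j. (j, k) \<in> R}" for j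
        using IH[of j] below_K[of j k] that unfolding admissible_def by blast
      have lower_total: "(i, j) \<in> R \<or> (j, i) \<in> R"
        if "i \<in> {j. (j, k) \<in> R}" "j \<in> {j. (j, k) \<in> R}" "i \<noteq> j" for i j
        using total below_K that by blast
      obtain P Q where "wings_extend X x (\<Union>j\<in>{j. (j, k) \<in> R}. fst (g j))
          (\<Union>j\<in>{j. (j, k) \<in> R}. snd (g j)) P Q" "handles x (e k) P Q"
        using wings_extend_step[OF X lower_wings lower_total small[OF True] e[OF True]] by blast
      then show ?thesis unfolding admissible_def by (intro exI[of _ "(P, Q)"]) simp
    qed (simp add: admissible_def)
  qed
  then obtain h where "\<And>k. admissible h k (h k)" by blast
  then show ?thesis
    by (intro exI[of _ "\<lambda>k. fst (h k)"] exI[of _ "\<lambda>k. snd (h k)"]) (simp add: admissible_def)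
qed

lemma well_order_card_of_minus_Id:
  shows "wf ( |K| - Id)"
    and "j \<in> K \<Longrightarrow> k \<in> K \<Longrightarrow> j \<noteq> k \<Longrightarrow> (j, k) \<in> |K| - Id \<or> (k, j) \<in> |K| - Id"
    and "(j, k) \<in> |K| - Id \<Longrightarrow> j \<in> K"
    and "k \<in> K \<Longrightarrow> card_lt {j. (j, k) \<in> |K| - Id} K"
proof -
  have wo: "well_order_on K |K|" by (rule card_of_well_order_on)
  then show "wf ( |K| - Id)" unfolding well_order_on_def by blast
  show "j \<in> K \<Longrightarrow> k \<in> K \<Longrightarrow> j \<noteq> k \<Longrightarrow> (j, k) \<in> |K| - Id \<or> (k, j) \<in> |K| - Id"
    using wo unfolding well_order_on_def linear_order_on_def total_on_def by blast
  show "(j, k) \<in> |K| - Id \<Longrightarrow> j \<in> K"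
    using well_order_on_domain[OF wo] by blast
  assume "k \<in> K"
  moreover have "{j. (j, k) \<in> |K| - Id} = underS |K| k" unfolding underS_def by auto
  ultimately show "card_lt {j. (j, k) \<in> |K| - Id} K"
    using card_of_underS[OF card_of_Card_order, of k K] unfolding card_lt_def Field_card_of by simp
qed

lemma strong_butterfly_point_if_clopens_indexed:
  fixes e :: "'k \<Rightarrow> 'a set"
  assumes X: "kappa_Parovicenko X K" and e: "e ` K = {C. clopenin X C}" and x: "x \<in> topspace X"
  shows "strong_butterfly_point X x"
proof -
  have zd: "zero_dimensional X" and H: "Hausdorff_space X"
    using X unfolding kappa_Parovicenko_def by auto
  have ek: "clopenin X (e k)" if "k \<in> K" for k using imageI[OF that, of e] e by simp
  have "\<exists>P Q :: 'k \<Rightarrow> 'a set. \<forall>k\<in>K.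
      wings_extend X x (\<Union>j\<in>{j. (j, k) \<in> |K| - Id}. P j) (\<Union>j\<in>{j. (j, k) \<in> |K| - Id}. Q j) (P k) (Q k) \<and>
      handles x (e k) (P k) (Q k)"
    by (rule wings_extend_recursion[OF X]) (fact ek well_order_card_of_minus_Id)+
  then obtain P Q :: "'k \<Rightarrow> 'a set" where wings_handles: "\<forall>k\<in>K.
      wings_extend X x (\<Union>j\<in>{j. (j, k) \<in> |K| - Id}. P j) (\<Union>j\<in>{j. (j, k) \<in> |K| - Id}. Q j) (P k) (Q k) \<and>
      handles x (e k) (P k) (Q k)"
    by blast
  have wings: "wings_extend X x (\<Union>j\<in>{j. (j, k) \<in> |K| - Id}. P j) (\<Union>j\<in>{j. (j, k) \<in> |K| - Id}. Q j)
      (P k) (Q k)" if "k \<in> K" for k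
    using wings_handles that by blast
  show ?thesis
  proof (rule strong_butterfly_point_if_clopen_wings[OF zd H x])
    show "clopenin X (P k) \<and> clopenin X (Q k) \<and> x \<notin> P k \<union> Q k" if "k \<in> K" for k
      using wings[OF that] unfolding wings_extend_def by blast
    show "P j \<inter> Q k = {}" if "j \<in> K" "k \<in> K" for j k
      by (rule wings_extend_disjoint[OF wings well_order_card_of_minus_Id(2) that])
    show "\<exists>k\<in>K. handles x C (P k) (Q k)" if "clopenin X C" for C
    proof -
      have "C \<in> e ` K" using that e by simp
      then obtain k where "k \<in> K" "C = e k" by blast
      then show ?thesis using wings_handles by blast
    qed
  qed
qed

theorem lemma4p1:
  fixes K :: "'k set" and X :: "'a topology" and x :: 'a
  assumes "infinite K"
    and "kappa_eq_kappa_less_kappa K"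
    and "kappa_Parovicenko X K"
    and "weight_eq X K"
    and "x \<in> topspace X"
  shows "strong_butterfly_point X x"
proof -
  \<comment> \<open>Only weight \<open>\<le> \<kappa>\<close> is used: \<open>\<kappa> = \<kappa>\<^sup><\<^sup>\<kappa>\<close> matters for the existence and uniqueness of
    \<open>S\<^sub>\<kappa>\<close>, not for the butterfly property.\<close>
  have cs: "compact_space X" using assms(3) unfolding kappa_Parovicenko_def by blast
  obtain \<B> where \<B>: "is_base X \<B>" "|\<B>| =o |K|"
    using assms(4) unfolding weight_eq_def card_eq_def by blast
  have "infinite \<B>" using card_of_ordIso_finite[OF \<B>(2)] assms(1) by simp
  then have "|{C. clopenin X C}| \<le>o |K|"
    using ordLeq_ordIso_trans[OF card_of_clopens_ordLeq_base[OF cs \<B>(1)] \<B>(2)] by blast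
  moreover have "{C. clopenin X C} \<noteq> {}" by (auto simp: clopenin_def)
  ultimately obtain e :: "'k \<Rightarrow> 'a set" where "e ` K = {C. clopenin X C}"
    using card_of_ordLeq2[of "{C. clopenin X C}" K] by blast
  then show ?thesis
    by (rule strong_butterfly_point_if_clopens_indexed[OF assms(3) _ assms(5)])
qed

end
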